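(* Let $\mathcal{Y}$ be finite (with the discrete topology) and let $\Gamma\colon\Delta(\mathcal{Y})\to2^{\mathcal{V}}$ be a property identified by $\nu$. For every $\gamma\in\mathcal{V}$ with $\Gamma^{-1}(\gamma)\ne\emptyset$, $$\{g\in C(\mathcal{Y}):g\le\alpha\nu_\gamma\text{ for some }\alpha\in\mathbb{R}\}=\mathcal{G}_{\Gamma^{-1}(\gamma)},$$ i.e. no closure is needed.
   Context: For finite $\mathcal{Y}$, $C(\mathcal{Y})\cong\mathbb{R}^{\mathcal{Y}}$ with coordinatewise order, $\Delta(\mathcal{Y})$ is the probability simplex, $\mathbb{E}_\phi[f]=\sum_y\phi(y)f(y)$. Level set: $\Gamma^{-1}(\gamma)=\{\phi\in\Delta(\mathcal{Y}):\gamma\in\Gamma(\phi)\}$. A function $\nu\colon\mathcal{Y}\times\mathcal{V}\to\mathbb{R}$, $\nu_\gamma:=\nu(\cdot,\gamma)$, \emph{identifies} $\Gamma$ if for all $\phi\in\Delta(\mathcal{Y})$, $\gamma\in\mathcal{V}$: $\mathbb{E}_\phi[\nu_\gamma]=0\iff\gamma\in\Gamma(\phi)$. Available gambles: $\mathcal{G}_{\mathcal{P}}=\{g\in C(\mathcal{Y}):\sup_{\phi\in\mathcal{P}}\mathbb{E}_\phi[g]\le0\}$. *)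

theory Defs
  imports "HOL-Analysis.Analysis"
begin

text \<open>Finite outcome space: a type of class finite. C(Y) = functions 'y => real,
  ordered coordinatewise. Distributions are elements of the probability prob_simplex.\<close>

definition prob_simplex :: "('y::finite \<Rightarrow> real) set" where
  "prob_simplex = {\<phi>. (\<forall>y. 0 \<le> \<phi> y) \<and> (\<Sum>y\<in>UNIV. \<phi> y) = 1}"

definition expect :: "('y::finite \<Rightarrow> real) \<Rightarrow> ('y \<Rightarrow> real) \<Rightarrow> real" where
  "expect \<phi> f = (\<Sum>y\<in>UNIV. \<phi> y * f y)"

definition level_set :: "(('y::finite \<Rightarrow> real) \<Rightarrow> 'v set) \<Rightarrow> 'v \<Rightarrow> ('y \<Rightarrow> real) set" where
  "level_set \<Gamma> \<gamma> = {\<phi> \<in> prob_simplex. \<gamma> \<in> \<Gamma> \<phi>}"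

definition identifies :: "('y::finite \<Rightarrow> 'v \<Rightarrow> real) \<Rightarrow> (('y \<Rightarrow> real) \<Rightarrow> 'v set) \<Rightarrow> bool" where
  "identifies \<nu> \<Gamma> \<longleftrightarrow>
     (\<forall>\<phi>\<in>prob_simplex. \<forall>\<gamma>. expect \<phi> (\<lambda>y. \<nu> y \<gamma>) = 0 \<longleftrightarrow> \<gamma> \<in> \<Gamma> \<phi>)"

definition available_gambles :: "('y::finite \<Rightarrow> real) set \<Rightarrow> ('y \<Rightarrow> real) set" where
  "available_gambles P = {g. (SUP \<phi>\<in>P. expect \<phi> g) \<le> 0}"

end

theory Submission
  imports Defs
begin

text \<open>Write n for \<nu>(-,\<gamma>); the level set consists of the distributions under which n has
  mean zero. If g has non-positive expectation under all of them, testing g against the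
  point masses at zeros of n gives g \<le> 0 there, and testing it against the two-point
  distributions at p, q with n p > 0 > n q on which n has mean zero shows
  g p / n p \<le> g q / n q. Since the outcome space is finite, some \<alpha> separates these two
  finite families of ratios, and then g \<le> \<alpha> n pointwise.\<close>

lemma expect_mono:
  assumes "\<phi> \<in> prob_simplex" and "\<And>y. f y \<le> g y"
  shows "expect \<phi> f \<le> expect \<phi> g"
  using assms unfolding expect_def prob_simplex_def by (auto intro: sum_mono mult_left_mono)

lemma expect_cmult: "expect \<phi> (\<lambda>y. c * f y) = c * expect \<phi> f"
  unfolding expect_def by (simp add: sum_distrib_left algebra_simps)

lemma expect_le_sum_abs:
  assumes "\<phi> \<in> prob_simplex"
  shows "expect \<phi> g \<le> (\<Sum>y\<in>UNIV. \<bar>g y\<bar>)"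
proof -
  have "\<phi> y \<le> 1" for y
    using assms member_le_sum[of y UNIV \<phi>] unfolding prob_simplex_def by auto
  moreover have "0 \<le> \<phi> y" for y
    using assms unfolding prob_simplex_def by auto
  ultimately have "\<phi> y * g y \<le> \<bar>g y\<bar>" for y
    using mult_left_le_one_le[of "\<bar>g y\<bar>" "\<phi> y"] mult_left_mono[of "g y" "\<bar>g y\<bar>" "\<phi> y"]
    by force
  then show ?thesis
    unfolding expect_def by (intro sum_mono)
qed

lemma point_mass_in_prob_simplex: "(\<lambda>y. if y = a then 1 else 0) \<in> prob_simplex"
  unfolding prob_simplex_def by auto

lemma expect_point_mass: "expect (\<lambda>y. if y = a then 1 else 0) f = f a"
proof -
  have "(\<Sum>y\<in>UNIV. (if y = a then 1 else 0) * f y) = (\<Sum>y\<in>UNIV. if y = a then f a else 0)"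
    by (rule sum.cong) auto
  then show ?thesis unfolding expect_def by simp
qed

lemma expect_two_point:
  assumes "a \<noteq> b"
  shows "expect (\<lambda>y. if y = a then s else if y = b then t else 0) f = s * f a + t * f b"
proof -
  have "expect (\<lambda>y. if y = a then s else if y = b then t else 0) f
      = (\<Sum>y\<in>UNIV. (if y = a then s * f a else 0) + (if y = b then t * f b else 0))"
    unfolding expect_def by (rule sum.cong) (use assms in auto)
  then show ?thesis by (simp add: sum.distrib)
qed

lemma two_point_in_prob_simplex:
  assumes "a \<noteq> b" "0 \<le> s" "0 \<le> t" "s + t = 1"
  shows "(\<lambda>y. if y = a then s else if y = b then t else 0) \<in> prob_simplex"
  using expect_two_point[OF assms(1), of s t "\<lambda>_. 1"] assms
  unfolding prob_simplex_def expect_def by auto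

lemma finite_sets_separated:
  fixes A B :: "real set"
  assumes "finite A" "finite B" and "\<And>a b. a \<in> A \<Longrightarrow> b \<in> B \<Longrightarrow> a \<le> b"
  obtains \<alpha> where "\<And>a. a \<in> A \<Longrightarrow> a \<le> \<alpha>" and "\<And>b. b \<in> B \<Longrightarrow> \<alpha> \<le> b"
proof (cases "A = {}")
  case True
  show ?thesis
    by (rule that[of "if B = {} then 0 else Min B"]) (use True assms(2) in auto)
next
  case False
  show ?thesis
    by (rule that[of "Max A"]) (use False assms Max_in in auto)
qed

text \<open>The two-point distribution with weights proportional to -n q and n p makes n
  have mean zero, and testing g against it gives the ratio inequality.\<close>

lemma ratio_le_of_mean_zero_tests:
  fixes n g :: "'y::finite \<Rightarrow> real"
  assumes tests: "\<And>\<phi>. \<phi> \<in> prob_simplex \<Longrightarrow> expect \<phi> n = 0 \<Longrightarrow> expect \<phi> g \<le> 0"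
    and p: "n p > 0" and q: "n q < 0"
  shows "g p / n p \<le> g q / n q"
proof -
  define s where "s = - n q / (n p - n q)"
  define t where "t = n p / (n p - n q)"
  have "p \<noteq> q" using p q by auto
  have d: "n p - n q > 0" using p q by simp
  have "0 \<le> s" "0 \<le> t" "s + t = 1"
    using p q d unfolding s_def t_def by (auto simp: divide_simps)
  with \<open>p \<noteq> q\<close> have mem: "(\<lambda>y. if y = p then s else if y = q then t else 0) \<in> prob_simplex"
    by (rule two_point_in_prob_simplex)
  have "s * n p + t * n q = 0"
    unfolding s_def t_def using d by (simp add: field_simps)
  then have "s * g p + t * g q \<le> 0"
    using tests[OF mem] by (simp add: expect_two_point[OF \<open>p \<noteq> q\<close>])
  moreover have "s * g p + t * g q = (- n q * g p + n p * g q) / (n p - n q)"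
    unfolding s_def t_def by (simp add: add_divide_distrib diff_divide_distrib)
  ultimately have "- n q * g p + n p * g q \<le> 0"
    using d by (simp add: divide_le_0_iff)
  then show ?thesis
    using p q by (simp add: field_simps)
qed

lemma nonpos_on_mean_zero_iff_dominated:
  fixes n g :: "'y::finite \<Rightarrow> real"
  shows "(\<forall>\<phi>\<in>prob_simplex. expect \<phi> n = 0 \<longrightarrow> expect \<phi> g \<le> 0)
     \<longleftrightarrow> (\<exists>\<alpha>. \<forall>y. g y \<le> \<alpha> * n y)"
proof
  assume "\<exists>\<alpha>. \<forall>y. g y \<le> \<alpha> * n y"
  then obtain \<alpha> where dom: "\<And>y. g y \<le> \<alpha> * n y" by blast
  show "\<forall>\<phi>\<in>prob_simplex. expect \<phi> n = 0 \<longrightarrow> expect \<phi> g \<le> 0"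
  proof (intro ballI impI)
    fix \<phi> assume "\<phi> \<in> prob_simplex" "expect \<phi> n = 0"
    then have "expect \<phi> g \<le> \<alpha> * expect \<phi> n"
      using expect_mono[of \<phi> g "\<lambda>y. \<alpha> * n y"] dom by (simp add: expect_cmult)
    with \<open>expect \<phi> n = 0\<close> show "expect \<phi> g \<le> 0" by simp
  qed
next
  assume "\<forall>\<phi>\<in>prob_simplex. expect \<phi> n = 0 \<longrightarrow> expect \<phi> g \<le> 0"
  then have tests: "\<And>\<phi>. \<phi> \<in> prob_simplex \<Longrightarrow> expect \<phi> n = 0 \<Longrightarrow> expect \<phi> g \<le> 0"
    by blast
  have zero: "g y \<le> 0" if "n y = 0" for y
    using tests[OF point_mass_in_prob_simplex] that by (simp add: expect_point_mass)
  obtain \<alpha> where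
    above: "\<And>a. a \<in> (\<lambda>p. g p / n p) ` {p. n p > 0} \<Longrightarrow> a \<le> \<alpha>" and
    below: "\<And>b. b \<in> (\<lambda>q. g q / n q) ` {q. n q < 0} \<Longrightarrow> \<alpha> \<le> b"
  proof (rule finite_sets_separated)
    show "a \<le> b" if "a \<in> (\<lambda>p. g p / n p) ` {p. n p > 0}" "b \<in> (\<lambda>q. g q / n q) ` {q. n q < 0}"
      for a b
      using that ratio_le_of_mean_zero_tests[OF tests] by auto
  qed (simp_all, blast)
  have "g y \<le> \<alpha> * n y" for y
  proof (cases "n y" "0::real" rule: linorder_cases)
    case less
    then have "\<alpha> \<le> g y / n y" by (intro below) simp
    with less show ?thesis by (simp add: field_simps)
  next
    case equal
    then show ?thesis using zero by simp
  next
    case greater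
    then have "g y / n y \<le> \<alpha>" by (intro above) simp
    with greater show ?thesis by (simp add: field_simps)
  qed
  then show "\<exists>\<alpha>. \<forall>y. g y \<le> \<alpha> * n y" by blast
qed

lemma available_gambles_iff:
  assumes "P \<subseteq> prob_simplex" and "P \<noteq> {}"
  shows "g \<in> available_gambles P \<longleftrightarrow> (\<forall>\<phi>\<in>P. expect \<phi> g \<le> 0)"
proof -
  have "bdd_above ((\<lambda>\<phi>. expect \<phi> g) ` P)"
    using assms(1) expect_le_sum_abs by (intro bdd_aboveI2) blast
  then show ?thesis
    unfolding available_gambles_def using assms(2) by (simp add: cSUP_le_iff)
qed

lemma level_set_identified:
  assumes "identifies \<nu> \<Gamma>"
  shows "level_set \<Gamma> \<gamma> = {\<phi> \<in> prob_simplex. expect \<phi> (\<lambda>y. \<nu> y \<gamma>) = 0}"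
  using assms unfolding level_set_def identifies_def by auto

theorem mainTheorem9:
  fixes \<Gamma> :: "('y::finite \<Rightarrow> real) \<Rightarrow> 'v set"
    and \<nu> :: "'y \<Rightarrow> 'v \<Rightarrow> real"
    and \<gamma> :: 'v
  assumes "identifies \<nu> \<Gamma>"
    and "level_set \<Gamma> \<gamma> \<noteq> {}"
  shows "{g :: 'y \<Rightarrow> real. \<exists>\<alpha>::real. \<forall>y. g y \<le> \<alpha> * \<nu> y \<gamma>}
         = available_gambles (level_set \<Gamma> \<gamma>)"
proof -
  let ?L = "level_set \<Gamma> \<gamma>"
  have L: "?L = {\<phi> \<in> prob_simplex. expect \<phi> (\<lambda>y. \<nu> y \<gamma>) = 0}"
    using assms(1) by (rule level_set_identified)
  have "g \<in> available_gambles ?L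
      \<longleftrightarrow> (\<forall>\<phi>\<in>prob_simplex. expect \<phi> (\<lambda>y. \<nu> y \<gamma>) = 0 \<longrightarrow> expect \<phi> g \<le> 0)" for g
    by (subst available_gambles_iff[OF _ assms(2)]) (auto simp: L)
  then show ?thesis
    by (simp add: set_eq_iff nonpos_on_mean_zero_iff_dominated)
qed

end
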